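(* Let $\Omega\subset\mathbb{R}^2$ be a convex domain with Lipschitz boundary, let $d_1,d_2>0$, $c_1,c_2\in\mathbb{R}$, and let $f,g:\mathbb{R}^2\to\mathbb{R}$ be globally Lipschitz continuous with Lipschitz constants $L_f,L_g$ and bounded above by constants $\beta_f,\beta_g$ respectively. Let $T_h$ be a quasi-uniform triangulation of $\Omega$ with mesh size $h$, let $S_h$ be the space of continuous functions on $\Omega$ that are piecewise linear on each element of $T_h$, and let $\tau>0$ be a timestep with $\tau\max\{\beta_f,\beta_g\}<1$. Given $u^n,v^n\in S_h$, let $(u^{n+1},v^{n+1})\in S_h\times S_h$ satisfy, for all $\phi_h\in S_h$, $$\Big(\tfrac{u^{n+1}-u^n}{\tau},\phi_h\Big)+d_1(\nabla u^{n+1},\nabla\phi_h)=(c_1,\phi_h)+(f(u^{n+1},v^{n+1})u^{n+1},\phi_h),$$ $$\Big(\tfrac{v^{n+1}-v^n}{\tau},\phi_h\Big)+d_2(\nabla v^{n+1},\nabla\phi_h)=(c_2,\phi_h)+(g(u^{n+1},v^{n+1})v^{n+1},\phi_h),$$ and define Picard iterates $(u_k,v_k)\in S_h\times S_h$, $k\ge 0$, by requiring $(u_{k+1},v_{k+1})$ to satisfy, for all $\phi_h\in S_h$, $$\Big(\tfrac{u_{k+1}-u^n}{\tau},\phi_h\Big)+d_1(\nabla u_{k+1},\nabla\phi_h)=(c_1,\phi_h)+(f(u_k,v_k)u_{k+1},\phi_h),$$ $$\Big(\tfrac{v_{k+1}-v^n}{\tau},\phi_h\Big)+d_2(\nabla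 v_{k+1},\nabla\phi_h)=(c_2,\phi_h)+(g(u_k,v_k)v_{k+1},\phi_h).$$ Assume that $u$ and $v$ (the iterates and the discrete solution) remain positive, and that the fully discrete solution $\xi^{n+1}=(u^{n+1},v^{n+1})$ approximates the exact solution $\Xi=(U,V)$ of the system $\partial_t u-d_1\nabla^2 u=c_1+f(u,v)u$, $\partial_t v-d_2\nabla^2 v=c_2+g(u,v)v$ (homogeneous Neumann boundary conditions) at time $t^{n+1}$ with $\|\Xi(t^{n+1})-\xi^{n+1}\|_\infty\le C'(\Xi)(h^2+\tau)$. Then, writing $\xi_k=(u_k,v_k)$, $L=\max\{L_f,L_g\}$ and $\beta=\max\{\beta_f,\beta_g\}$, there are constants $C,C'$ (independent of $k$) such that $$\|\xi_{k+1}-\xi^{n+1}\|\le \lambda\,\|\xi_k-\xi^{n+1}\|,\qquad \lambda:=CL\frac{\tau}{1-\tau\beta}\big(1+C'(\tau+h^2)\big),$$ so that $\lambda<1$ for sufficiently small $\tau$ and $h$ (hence the Picard iteration converges to $(u^{n+1},v^{n+1})$), and $\lambda\to0$ as $\tau\to0$ and $h\to0$ simultaneously.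
   Context: $(\cdot,\cdot)$ denotes the $L_2(\Omega)$ inner product and $\|\cdot\|$ the $L_2(\Omega)$ norm; for a pair $\xi=(u,v)$, $\|\xi\|$ is bounded by $\|u\|+\|v\|$, and $\|\cdot\|_\infty$ denotes the $L_\infty$ norm. The scheme is the backward Euler finite element discretisation of the reaction-diffusion system, and the Picard iteration linearises the reaction terms by evaluating $f,g$ at the previous iterate. *)

theory Defs
  imports "HOL-Analysis.Analysis"
begin

definition l2_inner :: "(real^2) set \<Rightarrow> (real^2 \<Rightarrow> real) \<Rightarrow> (real^2 \<Rightarrow> real) \<Rightarrow> real" where
  "l2_inner \<Omega> w \<phi> = (LINT x:\<Omega>|lebesgue. w x * \<phi> x)"

definition l2_norm :: "(real^2) set \<Rightarrow> (real^2 \<Rightarrow> real) \<Rightarrow> real" where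
  "l2_norm \<Omega> w = sqrt (l2_inner \<Omega> w w)"

definition pair_l2_norm :: "(real^2) set \<Rightarrow> (real^2 \<Rightarrow> real) \<Rightarrow> (real^2 \<Rightarrow> real) \<Rightarrow> real" where
  "pair_l2_norm \<Omega> u v = sqrt ((l2_norm \<Omega> u)\<^sup>2 + (l2_norm \<Omega> v)\<^sup>2)"

definition grad :: "(real^2 \<Rightarrow> real) \<Rightarrow> real^2 \<Rightarrow> real^2" where
  "grad w x = (\<chi> i. frechet_derivative w (at x) (axis i 1))"

definition grad_inner :: "(real^2) set \<Rightarrow> (real^2 \<Rightarrow> real) \<Rightarrow> (real^2 \<Rightarrow> real) \<Rightarrow> real" where
  "grad_inner \<Omega> w \<phi> = (LINT x:\<Omega>|lebesgue. grad w x \<bullet> grad \<phi> x)"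

definition laplacian :: "(real^2 \<Rightarrow> real) \<Rightarrow> real^2 \<Rightarrow> real" where
  "laplacian w x = (\<Sum>i\<in>UNIV. frechet_derivative (\<lambda>y. grad w y $ i) (at x) (axis i 1))"

definition is_triangle :: "(real^2) set \<Rightarrow> bool" where
  "is_triangle K = (\<exists>a b c. \<not> collinear {a, b, c} \<and> K = convex hull {a, b, c})"

definition vertices :: "(real^2) set \<Rightarrow> (real^2) set" where
  "vertices K = {x. x extreme_point_of K}"

text \<open>Conforming triangulation: two distinct triangles meet in the convex hull of a set of
  common vertices (empty, a common vertex or a common edge).\<close>
definition conforming_triangulation :: "(real^2) set \<Rightarrow> (real^2) set set \<Rightarrow> bool" where
  "conforming_triangulation \<Omega> \<T> =
     (finite \<T> \<and> \<T> \<noteq> {} \<and> (\<forall>K\<in>\<T>. is_triangle K) \<and> \<Union>\<T> = closure \<Omega> \<and>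
      (\<forall>K\<in>\<T>. \<forall>K'\<in>\<T>. K \<noteq> K' \<longrightarrow>
         (\<exists>S. S \<subseteq> vertices K \<inter> vertices K' \<and> K \<inter> K' = convex hull S)))"

definition mesh_size :: "(real^2) set set \<Rightarrow> real" where
  "mesh_size \<T> = Max (diameter ` \<T>)"

definition quasi_uniform :: "real \<Rightarrow> (real^2) set set \<Rightarrow> bool" where
  "quasi_uniform \<sigma> \<T> = (\<forall>K\<in>\<T>. \<exists>c. ball c (mesh_size \<T> / \<sigma>) \<subseteq> K)"

definition P1_space :: "(real^2) set \<Rightarrow> (real^2) set set \<Rightarrow> (real^2 \<Rightarrow> real) set" where
  "P1_space \<Omega> \<T> = {w. continuous_on (closure \<Omega>) w \<and> (\<forall>x. x \<notin> closure \<Omega> \<longrightarrow> w x = 0) \<and>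
                      (\<forall>K\<in>\<T>. \<exists>a b. \<forall>x\<in>K. w x = a \<bullet> x + b)}"

definition fe_equation :: "(real^2) set \<Rightarrow> (real^2) set set \<Rightarrow> real \<Rightarrow> real \<Rightarrow> real \<Rightarrow>
     (real^2 \<Rightarrow> real) \<Rightarrow> (real^2 \<Rightarrow> real) \<Rightarrow> (real^2 \<Rightarrow> real) \<Rightarrow> bool" where
  "fe_equation \<Omega> \<T> \<tau> d c F w0 w1 =
     (\<forall>\<phi>\<in>P1_space \<Omega> \<T>.
        l2_inner \<Omega> (\<lambda>x. (w1 x - w0 x) / \<tau>) \<phi> + d * grad_inner \<Omega> w1 \<phi>
        = l2_inner \<Omega> (\<lambda>x. c) \<phi> + l2_inner \<Omega> (\<lambda>x. F x * w1 x) \<phi>)"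

definition twice_differentiable_on :: "(real^2) set \<Rightarrow> (real^2 \<Rightarrow> real) \<Rightarrow> bool" where
  "twice_differentiable_on \<Omega> w =
     ((\<forall>x\<in>\<Omega>. w differentiable (at x)) \<and>
      (\<forall>i. \<forall>x\<in>\<Omega>. (\<lambda>y. grad w y $ i) differentiable (at x)))"

definition outward_unit_normal :: "(real^2) set \<Rightarrow> real^2 \<Rightarrow> real^2 \<Rightarrow> bool" where
  "outward_unit_normal \<Omega> x \<nu> = (x \<in> frontier \<Omega> \<and> norm \<nu> = 1 \<and> (\<forall>y\<in>\<Omega>. \<nu> \<bullet> (y - x) \<le> 0))"

definition rd_neumann_solution ::
  "(real^2) set \<Rightarrow> real \<Rightarrow> real \<Rightarrow> real \<Rightarrow> real \<Rightarrow> real \<Rightarrow>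
   (real \<times> real \<Rightarrow> real) \<Rightarrow> (real \<times> real \<Rightarrow> real) \<Rightarrow>
   (real \<Rightarrow> real^2 \<Rightarrow> real) \<Rightarrow> (real \<Rightarrow> real^2 \<Rightarrow> real) \<Rightarrow> bool" where
  "rd_neumann_solution \<Omega> T d1 d2 c1 c2 f g U V =
     (continuous_on ({0..T} \<times> closure \<Omega>) (\<lambda>(t, x). U t x) \<and>
      continuous_on ({0..T} \<times> closure \<Omega>) (\<lambda>(t, x). V t x) \<and>
      (\<forall>t\<in>{0<..T}.
         twice_differentiable_on \<Omega> (U t) \<and> twice_differentiable_on \<Omega> (V t) \<and>
         (\<forall>x\<in>\<Omega>. \<exists>Ut Vt.
            ((\<lambda>s. U s x) has_real_derivative Ut) (at t within {0..T}) \<and>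
            ((\<lambda>s. V s x) has_real_derivative Vt) (at t within {0..T}) \<and>
            Ut - d1 * laplacian (U t) x = c1 + f (U t x, V t x) * U t x \<and>
            Vt - d2 * laplacian (V t) x = c2 + g (U t x, V t x) * V t x) \<and>
         (\<forall>x \<nu>. outward_unit_normal \<Omega> x \<nu> \<and> (\<forall>\<nu>'. outward_unit_normal \<Omega> x \<nu>' \<longrightarrow> \<nu>' = \<nu>) \<longrightarrow>
            ((\<lambda>y. grad (U t) y \<bullet> \<nu>) \<longlongrightarrow> 0) (at x within \<Omega>) \<and>
            ((\<lambda>y. grad (V t) y \<bullet> \<nu>) \<longlongrightarrow> 0) (at x within \<Omega>))))"

end

theory Submission
  imports Defs
begin

text \<open>Subtract the discrete equation for \<open>u\<^sup>n\<^sup>+\<^sup>1\<close> from the Picard equation for \<open>u\<^sub>k\<^sub>+\<^sub>1\<close> and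
  test with the error \<open>e = u\<^sub>k\<^sub>+\<^sub>1 - u\<^sup>n\<^sup>+\<^sup>1 \<in> S\<^sub>h\<close>. The diffusion terms contribute
  \<open>d \<parallel>\<nabla>e\<parallel>\<^sup>2 \<ge> 0\<close>, and the reaction terms split as
  \<open>f(\<xi>\<^sub>k) e + (f(\<xi>\<^sub>k) - f(\<xi>\<^sup>n\<^sup>+\<^sup>1)) u\<^sup>n\<^sup>+\<^sup>1\<close>. Since \<open>f \<le> \<beta>\<close>, Lipschitz continuity and
  Cauchy--Schwarz give \<open>(1/\<tau> - \<beta>) \<parallel>e\<parallel> \<le> L \<parallel>u\<^sup>n\<^sup>+\<^sup>1\<parallel>\<^sub>\<infinity> \<parallel>\<xi>\<^sub>k - \<xi>\<^sup>n\<^sup>+\<^sup>1\<parallel>\<close>, and likewise for \<open>v\<close>.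
  The \<open>L\<^sub>\<infinity>\<close> error estimate bounds \<open>\<parallel>u\<^sup>n\<^sup>+\<^sup>1\<parallel>\<^sub>\<infinity>\<close> by \<open>M + C'(\<tau> + h\<^sup>2)\<close>, where \<open>M\<close> bounds the
  exact solution, which is continuous on the compact set \<open>[0,T] \<times> closure \<Omega>\<close>; hence one can take
  \<open>C = \<surd>2 (M + 1)\<close>.\<close>

lemma grad_affine:
  assumes "open S" "x \<in> S" "\<And>y. y \<in> S \<Longrightarrow> w y = a \<bullet> y + b"
  shows "grad w x = a"
proof -
  have "((\<lambda>y. a \<bullet> y + b) has_derivative (\<lambda>h. a \<bullet> h)) (at x)"
    by (auto intro!: derivative_eq_intros)
  then have "(w has_derivative (\<lambda>h. a \<bullet> h)) (at x)"
    by (rule has_derivative_transform_within_open[OF _ assms(1,2)]) (use assms(3) in auto)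
  then have "frechet_derivative w (at x) = (\<lambda>h. a \<bullet> h)"
    by (metis frechet_derivative_at)
  then show ?thesis
    unfolding grad_def by (simp add: vec_eq_iff inner_axis)
qed

lemma P1_space_continuous_on: "w \<in> P1_space \<Omega> \<T> \<Longrightarrow> continuous_on (closure \<Omega>) w"
  unfolding P1_space_def by auto

lemma P1_space_affine_on:
  assumes "w \<in> P1_space \<Omega> \<T>" "K \<in> \<T>"
  obtains a b where "\<And>x. x \<in> K \<Longrightarrow> w x = a \<bullet> x + b"
  using assms unfolding P1_space_def by blast

lemma P1_space_diff:
  assumes "w1 \<in> P1_space \<Omega> \<T>" "w2 \<in> P1_space \<Omega> \<T>"
  shows "(\<lambda>x. w1 x - w2 x) \<in> P1_space \<Omega> \<T>"
proof -
  have "\<exists>a b. \<forall>x\<in>K. w1 x - w2 x = a \<bullet> x + b" if K: "K \<in> \<T>" for K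
  proof -
    obtain a b where "\<And>x. x \<in> K \<Longrightarrow> w1 x = a \<bullet> x + b" using P1_space_affine_on[OF assms(1) K] by metis
    moreover obtain a' b' where "\<And>x. x \<in> K \<Longrightarrow> w2 x = a' \<bullet> x + b'"
      using P1_space_affine_on[OF assms(2) K] by metis
    ultimately show ?thesis
      by (intro exI[of _ "a - a'"] exI[of _ "b - b'"]) (simp add: inner_diff_left)
  qed
  then show ?thesis
    using assms unfolding P1_space_def by (auto intro!: continuous_intros)
qed

lemma P1_space_grad_eq:
  assumes "w \<in> P1_space \<Omega> \<T>" "K \<in> \<T>"
  shows "\<exists>a. \<forall>x\<in>interior K. grad w x = a"
proof -
  obtain a b where "\<And>x. x \<in> K \<Longrightarrow> w x = a \<bullet> x + b" using P1_space_affine_on[OF assms] by metis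
  then have "grad w x = a" if "x \<in> interior K" for x
    by (intro grad_affine[of "interior K"]) (use that interior_subset in auto)
  then show ?thesis by blast
qed

lemma P1_space_grad_diff:
  assumes "w1 \<in> P1_space \<Omega> \<T>" "w2 \<in> P1_space \<Omega> \<T>" "K \<in> \<T>" "x \<in> interior K"
  shows "grad (\<lambda>y. w1 y - w2 y) x = grad w1 x - grad w2 x"
proof -
  obtain a b where ab: "\<And>y. y \<in> K \<Longrightarrow> w1 y = a \<bullet> y + b" using P1_space_affine_on[OF assms(1,3)] by metis
  obtain a' b' where ab': "\<And>y. y \<in> K \<Longrightarrow> w2 y = a' \<bullet> y + b'" using P1_space_affine_on[OF assms(2,3)] by metis
  have "grad w1 x = a" "grad w2 x = a'"
    by (intro grad_affine[of "interior K"]; use assms(4) ab ab' interior_subset in auto)+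
  moreover have "grad (\<lambda>y. w1 y - w2 y) x = a - a'"
    by (intro grad_affine[of "interior K" _ _ _ "b - b'"])
       (use assms(4) in \<open>auto simp: ab ab' inner_diff_left dest!: interior_subset[THEN subsetD]\<close>)
  ultimately show ?thesis by simp
qed

lemma conforming_triangulation_skeleton_null:
  assumes "conforming_triangulation \<Omega> \<T>"
  shows "\<Omega> - \<Union>(interior ` \<T>) \<in> null_sets lebesgue"
proof -
  have fin: "finite \<T>" and tri: "\<And>K. K \<in> \<T> \<Longrightarrow> is_triangle K" and un: "\<Union>\<T> = closure \<Omega>"
    using assms unfolding conforming_triangulation_def by auto
  have closed_convex: "closed K \<and> convex K" if K: "K \<in> \<T>" for K
  proof -
    obtain a b c where "K = convex hull {a, b, c}" using tri[OF K] unfolding is_triangle_def by blast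
    then show ?thesis by (auto intro!: compact_imp_closed compact_convex_hull)
  qed
  have "\<Omega> - \<Union>(interior ` \<T>) \<subseteq> \<Union>(frontier ` \<T>)"
  proof
    fix x assume x: "x \<in> \<Omega> - \<Union>(interior ` \<T>)"
    then obtain K where K: "K \<in> \<T>" "x \<in> K" using un closure_subset by blast
    then have "x \<in> frontier K" using x closed_convex[OF K(1)] by (auto simp: frontier_def)
    then show "x \<in> \<Union>(frontier ` \<T>)" using K by blast
  qed
  moreover have "negligible (\<Union>(frontier ` \<T>))"
    using fin closed_convex by (auto intro!: negligible_Union negligible_convex_frontier)
  ultimately show ?thesis
    by (simp add: negligible_subset negligible_iff_null_sets[symmetric])
qed

lemma AE_in_triangle_interior:
  assumes "conforming_triangulation \<Omega> \<T>"
  shows "AE x in lebesgue. x \<in> \<Omega> \<longrightarrow> (\<exists>K\<in>\<T>. x \<in> interior K)"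
  using AE_not_in[OF conforming_triangulation_skeleton_null[OF assms]] by eventually_elim blast

lemma set_integrable_piecewise_constant:
  fixes \<phi> :: "real^2 \<Rightarrow> real"
  assumes tri: "conforming_triangulation \<Omega> \<T>" and "open \<Omega>" "bounded \<Omega>"
    and const: "\<And>K x. K \<in> \<T> \<Longrightarrow> x \<in> interior K \<Longrightarrow> \<phi> x = c K"
  shows "set_integrable lebesgue \<Omega> \<phi>"
proof -
  have fin: "finite \<T>" using tri unfolding conforming_triangulation_def by auto
  have \<Omega>: "\<Omega> \<in> sets lebesgue" "emeasure lebesgue \<Omega> < \<infinity>"
    using lmeasurable_open[OF assms(3,2)] by (auto simp: fmeasurable_def)
  \<comment> \<open>a Borel version of \<open>\<phi>\<close>: the average of \<open>c\<close> over the open triangles containing \<open>x\<close>\<close>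
  define \<psi> where "\<psi> x = indicator \<Omega> x * ((\<Sum>K\<in>\<T>. indicator (interior K) x * c K) /
       (\<Sum>K\<in>\<T>. indicator (interior K) x))" for x :: "real^2"
  have \<psi>_meas: "\<psi> \<in> borel_measurable lebesgue"
    unfolding \<psi>_def using \<Omega>(1)
    by (intro borel_measurable_times borel_measurable_divide borel_measurable_sum
        borel_measurable_indicator) (auto simp: borel_open)
  have \<psi>_eq: "\<psi> x = indicator \<Omega> x *\<^sub>R \<phi> x \<and> \<bar>indicator \<Omega> x *\<^sub>R \<phi> x\<bar> \<le> (\<Sum>K\<in>\<T>. \<bar>c K\<bar>)"
    if x: "x \<in> \<Omega> \<longrightarrow> (\<exists>K\<in>\<T>. x \<in> interior K)" for x
  proof (cases "x \<in> \<Omega>")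
    case True
    then obtain K0 where K0: "K0 \<in> \<T>" "x \<in> interior K0" using x by blast
    have "(\<Sum>K\<in>\<T>. indicator (interior K) x * c K) = (\<Sum>K\<in>\<T>. indicator (interior K) x * \<phi> x)"
      by (rule sum.cong) (auto simp: const split: split_indicator)
    moreover have "(\<Sum>K\<in>\<T>. indicator (interior K) x :: real) \<ge> indicator (interior K0) x"
      using fin K0 by (intro member_le_sum) auto
    moreover have "\<bar>c K0\<bar> \<le> (\<Sum>K\<in>\<T>. \<bar>c K\<bar>)"
      using fin K0 by (intro member_le_sum) auto
    ultimately show ?thesis
      using True K0 const by (simp add: \<psi>_def sum_distrib_right[symmetric])
  qed (simp add: \<psi>_def)
  have AE_eq: "AE x in lebesgue. \<psi> x = indicator \<Omega> x *\<^sub>R \<phi> x \<and>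
      \<bar>indicator \<Omega> x *\<^sub>R \<phi> x\<bar> \<le> (\<Sum>K\<in>\<T>. \<bar>c K\<bar>)"
    using AE_in_triangle_interior[OF tri] by eventually_elim (rule \<psi>_eq)
  have "(\<lambda>x. indicator \<Omega> x *\<^sub>R \<phi> x) \<in> borel_measurable lebesgue"
    by (rule borel_measurable_AE[OF \<psi>_meas]) (use AE_eq in auto)
  then show ?thesis
    unfolding set_integrable_def
    by (rule integrableI_bounded_set[OF \<Omega>(1) _ \<Omega>(2), where B = "\<Sum>K\<in>\<T>. \<bar>c K\<bar>"])
       (use AE_eq in \<open>auto elim!: AE_mp\<close>)
qed

lemma set_integrable_grad_inner_P1:
  assumes "conforming_triangulation \<Omega> \<T>" "open \<Omega>" "bounded \<Omega>"
    and "w \<in> P1_space \<Omega> \<T>" "p \<in> P1_space \<Omega> \<T>"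
  shows "set_integrable lebesgue \<Omega> (\<lambda>x. grad w x \<bullet> grad p x)"
proof -
  obtain A where A: "\<And>K x. K \<in> \<T> \<Longrightarrow> x \<in> interior K \<Longrightarrow> grad w x = A K"
    using P1_space_grad_eq[OF assms(4)] by metis
  obtain B where B: "\<And>K x. K \<in> \<T> \<Longrightarrow> x \<in> interior K \<Longrightarrow> grad p x = B K"
    using P1_space_grad_eq[OF assms(5)] by metis
  show ?thesis
    by (rule set_integrable_piecewise_constant[OF assms(1-3), where c = "\<lambda>K. A K \<bullet> B K"])
       (simp add: A B)
qed

lemma grad_inner_monotone:
  assumes tri: "conforming_triangulation \<Omega> \<T>" and "open \<Omega>" "bounded \<Omega>"
    and w1: "w1 \<in> P1_space \<Omega> \<T>" and w2: "w2 \<in> P1_space \<Omega> \<T>"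
  shows "grad_inner \<Omega> w2 (\<lambda>x. w1 x - w2 x) \<le> grad_inner \<Omega> w1 (\<lambda>x. w1 x - w2 x)"
proof -
  define e where "e x = w1 x - w2 x" for x
  have e: "e \<in> P1_space \<Omega> \<T>" unfolding e_def by (rule P1_space_diff[OF w1 w2])
  have "AE x in lebesgue. x \<in> \<Omega> \<longrightarrow> 0 \<le> grad w1 x \<bullet> grad e x - grad w2 x \<bullet> grad e x"
    using AE_in_triangle_interior[OF tri]
  proof eventually_elim
    case (elim x)
    show ?case
    proof
      assume "x \<in> \<Omega>"
      then obtain K where "K \<in> \<T>" "x \<in> interior K" using elim by blast
      then have "grad e x = grad w1 x - grad w2 x"
        unfolding e_def by (rule P1_space_grad_diff[OF w1 w2])
      then have "grad w1 x \<bullet> grad e x - grad w2 x \<bullet> grad e x = grad e x \<bullet> grad e x"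
        by (simp add: inner_diff_left)
      then show "0 \<le> grad w1 x \<bullet> grad e x - grad w2 x \<bullet> grad e x" by simp
    qed
  qed
  then have "0 \<le> (LINT x:\<Omega>|lebesgue. grad w1 x \<bullet> grad e x - grad w2 x \<bullet> grad e x)"
    unfolding set_lebesgue_integral_def
    by (intro integral_nonneg_AE) (auto elim!: AE_mp split: split_indicator)
  also have "\<dots> = grad_inner \<Omega> w1 e - grad_inner \<Omega> w2 e"
    unfolding grad_inner_def
    by (intro set_integral_diff(2) set_integrable_grad_inner_P1[OF tri] assms e)
  finally show ?thesis unfolding e_def by simp
qed

lemma set_integrable_continuous_on_closure:
  fixes p :: "'a::euclidean_space \<Rightarrow> real"
  assumes "\<Omega> \<in> sets lebesgue" "bounded \<Omega>" "continuous_on (closure \<Omega>) p"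
  shows "set_integrable lebesgue \<Omega> p"
proof -
  have "integrable lborel (\<lambda>x. indicator (closure \<Omega>) x *\<^sub>R p x)"
    using assms(2,3) by (intro borel_integrable_compact) (auto simp: compact_closure)
  then have "set_integrable lebesgue (closure \<Omega>) p"
    unfolding set_integrable_def
    using integrable_completion[of "\<lambda>x. indicator (closure \<Omega>) x *\<^sub>R p x" lborel]
    by (simp add: borel_measurable_integrable)
  then show ?thesis
    by (rule set_integrable_subset) (use assms(1) closure_subset in auto)
qed

lemma set_integral_nonneg:
  fixes f :: "_ \<Rightarrow> real"
  assumes "\<And>x. x \<in> A \<Longrightarrow> 0 \<le> f x"
  shows "0 \<le> (LINT x:A|M. f x)"
  unfolding set_lebesgue_integral_def
  by (rule integral_nonneg_AE) (use assms in \<open>auto split: split_indicator\<close>)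

lemma l2_norm_nonneg: "0 \<le> l2_norm \<Omega> w"
  unfolding l2_norm_def l2_inner_def by (simp add: set_integral_nonneg)

lemma l2_norm_squared: "(l2_norm \<Omega> w)\<^sup>2 = l2_inner \<Omega> w w"
  unfolding l2_norm_def l2_inner_def by (simp add: set_integral_nonneg)

lemma l2_inner_diff_left:
  assumes "set_integrable lebesgue \<Omega> (\<lambda>x. a x * \<phi> x)" "set_integrable lebesgue \<Omega> (\<lambda>x. b x * \<phi> x)"
  shows "l2_inner \<Omega> (\<lambda>x. a x - b x) \<phi> = l2_inner \<Omega> a \<phi> - l2_inner \<Omega> b \<phi>"
  unfolding l2_inner_def left_diff_distrib by (rule set_integral_diff(2)[OF assms])

lemma le_sqrt_mult_if_weighted_AM_GM:
  fixes I P Q :: real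
  assumes "0 \<le> I" "0 \<le> P" "0 \<le> Q" and AM_GM: "\<And>s. s > 0 \<Longrightarrow> 2 * I \<le> s * P + Q / s"
  shows "I \<le> sqrt P * sqrt Q"
proof (cases "P > 0 \<and> Q > 0")
  case True
  then have "2 * I \<le> sqrt Q / sqrt P * P + Q / (sqrt Q / sqrt P)"
    by (intro AM_GM) simp
  also have "\<dots> = 2 * (sqrt P * sqrt Q)"
    using True by (simp add: field_simps real_sqrt_mult[symmetric])
  finally show ?thesis by simp
next
  case False
  show ?thesis
  proof (rule ccontr)
    assume "\<not> ?thesis"
    then have I: "I > 0" using assms False by auto
    show False
    proof (cases "P = 0")
      case True
      have "2 * I \<le> Q / ((Q + 1) / I)" using AM_GM[of "(Q + 1) / I"] True I assms(3) by simp
      also have "\<dots> < I" using I assms(3) by (simp add: field_simps)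
      finally show False using I by simp
    next
      case False
      then have "Q = 0" using \<open>\<not> (P > 0 \<and> Q > 0)\<close> assms by auto
      then have "2 * I \<le> I / (P + 1) * P" using AM_GM[of "I / (P + 1)"] I assms(2) by simp
      also have "\<dots> < I" using I assms(2) by (simp add: field_simps)
      finally show False using I by simp
    qed
  qed
qed

lemma set_integral_abs_mult_le_l2_norm:
  fixes \<Omega> :: "(real^2) set" and p q :: "real^2 \<Rightarrow> real"
  assumes "\<Omega> \<in> sets lebesgue" "bounded \<Omega>"
    and "continuous_on (closure \<Omega>) p" "continuous_on (closure \<Omega>) q"
  shows "(LINT x:\<Omega>|lebesgue. \<bar>p x\<bar> * \<bar>q x\<bar>) \<le> l2_norm \<Omega> p * l2_norm \<Omega> q"
  unfolding l2_norm_def l2_inner_def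
proof (rule le_sqrt_mult_if_weighted_AM_GM)
  note integrable = set_integrable_continuous_on_closure[OF assms(1,2)]
  have pp: "set_integrable lebesgue \<Omega> (\<lambda>x. p x * p x)"
    and qq: "set_integrable lebesgue \<Omega> (\<lambda>x. q x * q x)"
    by (intro integrable continuous_intros assms(3,4))+
  fix s :: real assume s: "s > 0"
  have "2 * (LINT x:\<Omega>|lebesgue. \<bar>p x\<bar> * \<bar>q x\<bar>) = (LINT x:\<Omega>|lebesgue. 2 * (\<bar>p x\<bar> * \<bar>q x\<bar>))"
    by simp
  also have "\<dots> \<le> (LINT x:\<Omega>|lebesgue. s * (p x * p x) + q x * q x / s)"
  proof (rule set_integral_mono)
    fix x
    have "0 \<le> (s * \<bar>p x\<bar> - \<bar>q x\<bar>)\<^sup>2 / s" using s by simp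
    also have "\<dots> = s * (p x * p x) + q x * q x / s - 2 * (\<bar>p x\<bar> * \<bar>q x\<bar>)"
      using s by (simp add: field_simps power2_eq_square abs_mult_self_eq)
    finally show "2 * (\<bar>p x\<bar> * \<bar>q x\<bar>) \<le> s * (p x * p x) + q x * q x / s" by simp
  qed (use s in \<open>intro integrable continuous_intros assms(3,4); simp\<close>)+
  also have "\<dots> = s * (LINT x:\<Omega>|lebesgue. p x * p x) + (LINT x:\<Omega>|lebesgue. q x * q x) / s"
    using pp qq by (subst set_integral_add(2)) auto
  finally show "2 * (LINT x:\<Omega>|lebesgue. \<bar>p x\<bar> * \<bar>q x\<bar>) \<le>
      s * (LINT x:\<Omega>|lebesgue. p x * p x) + (LINT x:\<Omega>|lebesgue. q x * q x) / s" .
qed (simp_all add: set_integral_nonneg)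

lemma fe_equation_error_inequality:
  fixes w0 w1 wk F Fk :: "real^2 \<Rightarrow> real"
  assumes tri: "conforming_triangulation \<Omega> \<T>" and "open \<Omega>" "bounded \<Omega>" and "d \<ge> 0" and "\<tau> > 0"
    and "w0 \<in> P1_space \<Omega> \<T>" and w1: "w1 \<in> P1_space \<Omega> \<T>" and wk: "wk \<in> P1_space \<Omega> \<T>"
    and "continuous_on (closure \<Omega>) F" "continuous_on (closure \<Omega>) Fk"
    and eq1: "fe_equation \<Omega> \<T> \<tau> d c F w0 w1"
    and eqk: "fe_equation \<Omega> \<T> \<tau> d c Fk w0 wk"
  defines "e \<equiv> \<lambda>x. wk x - w1 x"
  shows "l2_inner \<Omega> (\<lambda>x. e x / \<tau>) e \<le> l2_inner \<Omega> (\<lambda>x. Fk x * wk x - F x * w1 x) e"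
proof -
  have e: "e \<in> P1_space \<Omega> \<T>" unfolding e_def by (rule P1_space_diff[OF wk w1])
  have cont: "continuous_on (closure \<Omega>) w0" "continuous_on (closure \<Omega>) w1"
    "continuous_on (closure \<Omega>) wk" "continuous_on (closure \<Omega>) e"
    using assms(6-8) e by (auto intro: P1_space_continuous_on)
  have integrable: "set_integrable lebesgue \<Omega> (\<lambda>x. a x * e x)"
    if "continuous_on (closure \<Omega>) a" for a
    using assms(2,3) cont(4) that
    by (intro set_integrable_continuous_on_closure continuous_intros) (auto simp: lmeasurable_open)
  have "l2_inner \<Omega> (\<lambda>x. (wk x - w0 x) / \<tau>) e - l2_inner \<Omega> (\<lambda>x. (w1 x - w0 x) / \<tau>) e
        + d * (grad_inner \<Omega> wk e - grad_inner \<Omega> w1 e)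
      = l2_inner \<Omega> (\<lambda>x. Fk x * wk x) e - l2_inner \<Omega> (\<lambda>x. F x * w1 x) e"
    using eq1 eqk e unfolding fe_equation_def by (simp add: algebra_simps)
  moreover have "0 \<le> d * (grad_inner \<Omega> wk e - grad_inner \<Omega> w1 e)"
    using assms(4) grad_inner_monotone[OF tri assms(2,3) wk w1] by (simp add: e_def)
  moreover have "l2_inner \<Omega> (\<lambda>x. (wk x - w0 x) / \<tau>) e - l2_inner \<Omega> (\<lambda>x. (w1 x - w0 x) / \<tau>) e
      = l2_inner \<Omega> (\<lambda>x. e x / \<tau>) e"
  proof -
    have "l2_inner \<Omega> (\<lambda>x. (wk x - w0 x) / \<tau>) e - l2_inner \<Omega> (\<lambda>x. (w1 x - w0 x) / \<tau>) e
      = l2_inner \<Omega> (\<lambda>x. (wk x - w0 x) / \<tau> - (w1 x - w0 x) / \<tau>) e"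
      by (rule l2_inner_diff_left[symmetric])
         (use assms(5) in \<open>intro integrable continuous_intros assms(9,10) cont; simp\<close>)+
    also have "(\<lambda>x. (wk x - w0 x) / \<tau> - (w1 x - w0 x) / \<tau>) = (\<lambda>x. e x / \<tau>)"
      by (simp add: e_def diff_divide_distrib)
    finally show ?thesis .
  qed
  moreover have "l2_inner \<Omega> (\<lambda>x. Fk x * wk x) e - l2_inner \<Omega> (\<lambda>x. F x * w1 x) e
      = l2_inner \<Omega> (\<lambda>x. Fk x * wk x - F x * w1 x) e"
    by (rule l2_inner_diff_left[symmetric])
       (use assms(5) in \<open>intro integrable continuous_intros assms(9,10) cont; simp\<close>)+
  ultimately show ?thesis by linarith
qed

lemma picard_component_estimate:
  fixes w0 w1 wk F Fk R :: "real^2 \<Rightarrow> real"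
  assumes tri: "conforming_triangulation \<Omega> \<T>" and "open \<Omega>" "bounded \<Omega>"
    and "d \<ge> 0" and "\<tau> > 0"
    and "w0 \<in> P1_space \<Omega> \<T>" and "w1 \<in> P1_space \<Omega> \<T>" and "wk \<in> P1_space \<Omega> \<T>"
    and "continuous_on (closure \<Omega>) F" "continuous_on (closure \<Omega>) Fk"
    and "continuous_on (closure \<Omega>) R"
    and "fe_equation \<Omega> \<T> \<tau> d c F w0 w1" "fe_equation \<Omega> \<T> \<tau> d c Fk w0 wk"
    and upper: "\<And>x. x \<in> \<Omega> \<Longrightarrow> Fk x \<le> \<beta>"
    and lipschitz: "\<And>x. x \<in> \<Omega> \<Longrightarrow> \<bar>Fk x - F x\<bar> \<le> L * R x"
    and bounded_w1: "\<And>x. x \<in> \<Omega> \<Longrightarrow> \<bar>w1 x\<bar> \<le> M"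
    and "L \<ge> 0" "M \<ge> 0"
  shows "(1 / \<tau> - \<beta>) * l2_norm \<Omega> (\<lambda>x. wk x - w1 x) \<le> L * M * l2_norm \<Omega> R"
proof -
  define e where "e x = wk x - w1 x" for x
  have cont: "continuous_on (closure \<Omega>) w1" "continuous_on (closure \<Omega>) wk"
    "continuous_on (closure \<Omega>) e"
    using assms(7,8) P1_space_diff[OF assms(8,7)]
    unfolding e_def by (auto intro: P1_space_continuous_on)
  have \<Omega>: "\<Omega> \<in> sets lebesgue" using lmeasurable_open[OF assms(3,2)] by (simp add: fmeasurableD)
  note integrable = set_integrable_continuous_on_closure[OF \<Omega> assms(3)]
  have pointwise: "(Fk x * wk x - F x * w1 x) * e x \<le> \<beta> * (e x * e x) + L * M * (\<bar>R x\<bar> * \<bar>e x\<bar>)"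
    if x: "x \<in> \<Omega>" for x
  proof -
    have "(Fk x * wk x - F x * w1 x) * e x = Fk x * (e x * e x) + (Fk x - F x) * w1 x * e x"
      unfolding e_def by (simp add: algebra_simps)
    also have "Fk x * (e x * e x) \<le> \<beta> * (e x * e x)"
      using upper[OF x] by (simp add: mult_right_mono)
    also have "(Fk x - F x) * w1 x * e x \<le> (L * \<bar>R x\<bar>) * M * \<bar>e x\<bar>"
    proof -
      have "\<bar>Fk x - F x\<bar> \<le> L * \<bar>R x\<bar>"
        using lipschitz[OF x] mult_left_mono[OF abs_ge_self \<open>L \<ge> 0\<close>] by (rule order_trans)
      then have "\<bar>Fk x - F x\<bar> * \<bar>w1 x\<bar> * \<bar>e x\<bar> \<le> (L * \<bar>R x\<bar>) * M * \<bar>e x\<bar>"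
        using bounded_w1[OF x] \<open>L \<ge> 0\<close> by (intro mult_right_mono mult_mono) auto
      moreover have "(Fk x - F x) * w1 x * e x \<le> \<bar>Fk x - F x\<bar> * \<bar>w1 x\<bar> * \<bar>e x\<bar>"
        by (metis abs_ge_self abs_mult)
      ultimately show ?thesis by linarith
    qed
    finally show ?thesis by (simp add: mult_ac)
  qed
  have ee: "set_integrable lebesgue \<Omega> (\<lambda>x. e x * e x)"
    and Re: "set_integrable lebesgue \<Omega> (\<lambda>x. \<bar>R x\<bar> * \<bar>e x\<bar>)"
    and error_term: "set_integrable lebesgue \<Omega> (\<lambda>x. (Fk x * wk x - F x * w1 x) * e x)"
    by (intro integrable continuous_intros cont assms(9-11))+
  have "l2_norm \<Omega> e ^ 2 / \<tau> = l2_inner \<Omega> (\<lambda>x. e x / \<tau>) e"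
    by (simp add: l2_norm_squared l2_inner_def)
  also have "\<dots> \<le> l2_inner \<Omega> (\<lambda>x. Fk x * wk x - F x * w1 x) e"
    unfolding e_def by (rule fe_equation_error_inequality[OF tri assms(2-10,12,13)])
  also have "\<dots> \<le> (LINT x:\<Omega>|lebesgue. \<beta> * (e x * e x) + L * M * (\<bar>R x\<bar> * \<bar>e x\<bar>))"
    unfolding l2_inner_def using ee Re by (intro set_integral_mono error_term pointwise) auto
  also have "\<dots> = \<beta> * l2_norm \<Omega> e ^ 2 + L * M * (LINT x:\<Omega>|lebesgue. \<bar>R x\<bar> * \<bar>e x\<bar>)"
    using ee Re by (subst set_integral_add(2)) (auto simp: l2_norm_squared l2_inner_def)
  also have "\<dots> \<le> \<beta> * l2_norm \<Omega> e ^ 2 + L * M * (l2_norm \<Omega> R * l2_norm \<Omega> e)"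
    using assms(17,18) set_integral_abs_mult_le_l2_norm[OF \<Omega> assms(3) assms(11) cont(3)]
    by (intro add_left_mono mult_left_mono) auto
  finally have "(1 / \<tau> - \<beta>) * l2_norm \<Omega> e * l2_norm \<Omega> e \<le> L * M * l2_norm \<Omega> R * l2_norm \<Omega> e"
    by (simp add: power2_eq_square algebra_simps)
  moreover have "0 \<le> L * M * l2_norm \<Omega> R"
    using assms(17,18) by (simp add: l2_norm_nonneg)
  ultimately have "(1 / \<tau> - \<beta>) * l2_norm \<Omega> e \<le> L * M * l2_norm \<Omega> R"
    using l2_norm_nonneg[of \<Omega> e] by (cases "l2_norm \<Omega> e = 0") auto
  then show ?thesis unfolding e_def .
qed

lemma pair_l2_norm_eq_l2_norm_norm:
  fixes p q :: "real^2 \<Rightarrow> real"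
  assumes "\<Omega> \<in> sets lebesgue" "bounded \<Omega>"
    and "continuous_on (closure \<Omega>) p" "continuous_on (closure \<Omega>) q"
  shows "pair_l2_norm \<Omega> p q = l2_norm \<Omega> (\<lambda>x. norm (p x, q x))"
proof -
  have "norm (p x, q x) * norm (p x, q x) = p x * p x + q x * q x" for x
    by (simp add: norm_Pair power2_eq_square[symmetric])
  then have "l2_inner \<Omega> p p + l2_inner \<Omega> q q = l2_inner \<Omega> (\<lambda>x. norm (p x, q x)) (\<lambda>x. norm (p x, q x))"
    unfolding l2_inner_def
    by (simp add: set_integral_add(2) set_integrable_continuous_on_closure[OF assms(1,2)]
        continuous_intros assms(3,4))
  then show ?thesis
    unfolding pair_l2_norm_def l2_norm_squared by (simp add: l2_norm_def)
qed

lemma pair_l2_norm_le: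
  assumes "l2_norm \<Omega> p \<le> c" "l2_norm \<Omega> q \<le> c"
  shows "pair_l2_norm \<Omega> p q \<le> sqrt 2 * c"
proof -
  have "0 \<le> c" using assms(1) l2_norm_nonneg order_trans by blast
  have "(l2_norm \<Omega> p)\<^sup>2 \<le> c\<^sup>2" "(l2_norm \<Omega> q)\<^sup>2 \<le> c\<^sup>2"
    using assms by (auto intro!: power_mono l2_norm_nonneg)
  then have "(l2_norm \<Omega> p)\<^sup>2 + (l2_norm \<Omega> q)\<^sup>2 \<le> 2 * c\<^sup>2" by simp
  then have "pair_l2_norm \<Omega> p q \<le> sqrt (2 * c\<^sup>2)"
    unfolding pair_l2_norm_def by simp
  also have "\<dots> = sqrt 2 * c" using \<open>0 \<le> c\<close> by (simp add: real_sqrt_mult)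
  finally show ?thesis .
qed

lemma picard_step_contraction:
  fixes f g :: "real \<times> real \<Rightarrow> real" and un vn u1 v1 uk vk uk' vk' :: "real^2 \<Rightarrow> real"
  assumes tri: "conforming_triangulation \<Omega> \<T>" and "open \<Omega>" "bounded \<Omega>"
    and "d1 \<ge> 0" "d2 \<ge> 0" and "\<tau> > 0" "\<tau> * \<beta> < 1"
    and f: "L-lipschitz_on UNIV f" "\<And>p. f p \<le> \<beta>"
    and g: "L-lipschitz_on UNIV g" "\<And>p. g p \<le> \<beta>"
    and P1: "un \<in> P1_space \<Omega> \<T>" "vn \<in> P1_space \<Omega> \<T>" "u1 \<in> P1_space \<Omega> \<T>" "v1 \<in> P1_space \<Omega> \<T>"
      "uk \<in> P1_space \<Omega> \<T>" "vk \<in> P1_space \<Omega> \<T>" "uk' \<in> P1_space \<Omega> \<T>" "vk' \<in> P1_space \<Omega> \<T>"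
    and eq: "fe_equation \<Omega> \<T> \<tau> d1 c1 (\<lambda>x. f (u1 x, v1 x)) un u1"
      "fe_equation \<Omega> \<T> \<tau> d2 c2 (\<lambda>x. g (u1 x, v1 x)) vn v1"
      "fe_equation \<Omega> \<T> \<tau> d1 c1 (\<lambda>x. f (uk x, vk x)) un uk'"
      "fe_equation \<Omega> \<T> \<tau> d2 c2 (\<lambda>x. g (uk x, vk x)) vn vk'"
    and bound: "\<And>x. x \<in> \<Omega> \<Longrightarrow> \<bar>u1 x\<bar> \<le> M \<and> \<bar>v1 x\<bar> \<le> M" and "M \<ge> 0"
  shows "pair_l2_norm \<Omega> (\<lambda>x. uk' x - u1 x) (\<lambda>x. vk' x - v1 x)
    \<le> sqrt 2 * L * M * (\<tau> / (1 - \<tau> * \<beta>)) * pair_l2_norm \<Omega> (\<lambda>x. uk x - u1 x) (\<lambda>x. vk x - v1 x)"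
proof -
  have \<Omega>: "\<Omega> \<in> sets lebesgue" using lmeasurable_open[OF assms(3,2)] by (simp add: fmeasurableD)
  have L: "L \<ge> 0" using lipschitz_on_nonneg[OF f(1)] .
  have cont: "continuous_on (closure \<Omega>) w" if "w \<in> P1_space \<Omega> \<T>" for w
    using that by (rule P1_space_continuous_on)
  have cont_comp: "continuous_on (closure \<Omega>) (\<lambda>x. h (a x, b x))"
    if "continuous_on UNIV h" "a \<in> P1_space \<Omega> \<T>" "b \<in> P1_space \<Omega> \<T>" for h :: "real \<times> real \<Rightarrow> real" and a b
    using continuous_on_compose2[OF that(1) continuous_on_Pair[OF cont[OF that(2)] cont[OF that(3)]]]
    by simp
  note cont_fg = cont_comp[OF lipschitz_on_continuous_on[OF f(1)]] cont_comp[OF lipschitz_on_continuous_on[OF g(1)]]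
  define R where "R x = norm (uk x - u1 x, vk x - v1 x)" for x
  have R: "continuous_on (closure \<Omega>) R"
    unfolding R_def by (intro continuous_intros cont P1)
  have lip: "\<bar>h (uk x, vk x) - h (u1 x, v1 x)\<bar> \<le> L * R x" if "L-lipschitz_on UNIV h" for h x
    using lipschitz_onD[OF that, of "(uk x, vk x)" "(u1 x, v1 x)"]
    by (simp add: R_def dist_real_def dist_norm)
  have \<gamma>: "1 / \<tau> - \<beta> = (1 - \<tau> * \<beta>) / \<tau>" "(1 - \<tau> * \<beta>) / \<tau> > 0"
    using assms(6,7) by (auto simp: field_simps)
  have component: "l2_norm \<Omega> (\<lambda>x. wk x - w1 x) \<le> L * M * (\<tau> / (1 - \<tau> * \<beta>)) * l2_norm \<Omega> R"
    if "(1 / \<tau> - \<beta>) * l2_norm \<Omega> (\<lambda>x. wk x - w1 x) \<le> L * M * l2_norm \<Omega> R" for wk w1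
  proof -
    have "l2_norm \<Omega> (\<lambda>x. wk x - w1 x) \<le> L * M * l2_norm \<Omega> R / ((1 - \<tau> * \<beta>) / \<tau>)"
      using that unfolding \<gamma>(1) pos_le_divide_eq[OF \<gamma>(2)] by (simp only: mult.commute)
    also have "\<dots> = L * M * (\<tau> / (1 - \<tau> * \<beta>)) * l2_norm \<Omega> R"
      using assms(6,7) by (simp add: field_simps)
    finally show ?thesis .
  qed
  have "l2_norm \<Omega> (\<lambda>x. uk' x - u1 x) \<le> L * M * (\<tau> / (1 - \<tau> * \<beta>)) * l2_norm \<Omega> R"
    by (intro component picard_component_estimate[OF tri assms(2-4,6) P1(1,3,7)
        cont_fg(1)[OF P1(3,4)] cont_fg(1)[OF P1(5,6)] R eq(1,3) f(2) lip[OF f(1)]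
        _ L \<open>M \<ge> 0\<close>]) (use bound in blast)
  moreover have "l2_norm \<Omega> (\<lambda>x. vk' x - v1 x) \<le> L * M * (\<tau> / (1 - \<tau> * \<beta>)) * l2_norm \<Omega> R"
    by (intro component picard_component_estimate[OF tri assms(2,3,5,6) P1(2,4,8)
        cont_fg(2)[OF P1(3,4)] cont_fg(2)[OF P1(5,6)] R eq(2,4) g(2) lip[OF g(1)]
        _ L \<open>M \<ge> 0\<close>]) (use bound in blast)
  ultimately have "pair_l2_norm \<Omega> (\<lambda>x. uk' x - u1 x) (\<lambda>x. vk' x - v1 x)
      \<le> sqrt 2 * (L * M * (\<tau> / (1 - \<tau> * \<beta>)) * l2_norm \<Omega> R)"
    by (rule pair_l2_norm_le)
  also have "l2_norm \<Omega> R = pair_l2_norm \<Omega> (\<lambda>x. uk x - u1 x) (\<lambda>x. vk x - v1 x)"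
    unfolding R_def
    by (rule pair_l2_norm_eq_l2_norm_norm[symmetric]) (intro \<Omega> assms(3) P1 continuous_intros cont)+
  finally show ?thesis by (simp add: mult_ac)
qed

lemma rd_neumann_solution_bounded:
  assumes "rd_neumann_solution \<Omega> T d1 d2 c1 c2 f g U V" "bounded \<Omega>"
  obtains M where "M \<ge> 0" "\<And>t x. t \<in> {0..T} \<Longrightarrow> x \<in> closure \<Omega> \<Longrightarrow> \<bar>U t x\<bar> \<le> M \<and> \<bar>V t x\<bar> \<le> M"
proof -
  have "compact ({0..T} \<times> closure \<Omega>)"
    using assms(2) by (intro compact_Times) (auto simp: compact_closure)
  moreover have "continuous_on ({0..T} \<times> closure \<Omega>) (\<lambda>(t, x). U t x)"
    "continuous_on ({0..T} \<times> closure \<Omega>) (\<lambda>(t, x). V t x)"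
    using assms(1) unfolding rd_neumann_solution_def by auto
  ultimately obtain MU MV where
    "\<forall>y\<in>{0..T} \<times> closure \<Omega>. norm ((\<lambda>(t, x). U t x) y) \<le> MU"
    "\<forall>y\<in>{0..T} \<times> closure \<Omega>. norm ((\<lambda>(t, x). V t x) y) \<le> MV"
    by (metis compact_continuous_image compact_imp_bounded bounded_iff image_eqI)
  then show thesis
    by (intro that[of "max 0 (max MU MV)"]) force+
qed

theorem mainTheorem1:
  fixes \<Omega> :: "(real^2) set"
    and T d1 d2 c1 c2 L\<^sub>f L\<^sub>g \<beta>\<^sub>f \<beta>\<^sub>g C' \<sigma> :: real
    and f g :: "real \<times> real \<Rightarrow> real"
    and U V :: "real \<Rightarrow> real^2 \<Rightarrow> real"
  assumes "open \<Omega>" and "convex \<Omega>" and "bounded \<Omega>" and "\<Omega> \<noteq> {}"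
    and "d1 > 0" and "d2 > 0"
    and "L\<^sub>f-lipschitz_on UNIV f" and "L\<^sub>g-lipschitz_on UNIV g"
    and "\<forall>p. f p \<le> \<beta>\<^sub>f" and "\<forall>p. g p \<le> \<beta>\<^sub>g"
    and "\<sigma> > 0"
    and "rd_neumann_solution \<Omega> T d1 d2 c1 c2 f g U V"
  shows "\<exists>C. \<forall>(\<T> :: (real^2) set set) h \<tau> (n :: nat) un vn u1 v1
                 (uk :: nat \<Rightarrow> real^2 \<Rightarrow> real) (vk :: nat \<Rightarrow> real^2 \<Rightarrow> real).
      conforming_triangulation \<Omega> \<T> \<and> quasi_uniform \<sigma> \<T> \<and> h = mesh_size \<T> \<and>
      \<tau> > 0 \<and> \<tau> * max \<beta>\<^sub>f \<beta>\<^sub>g < 1 \<and> real (Suc n) * \<tau> \<le> T \<and>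
      un \<in> P1_space \<Omega> \<T> \<and> vn \<in> P1_space \<Omega> \<T> \<and>
      u1 \<in> P1_space \<Omega> \<T> \<and> v1 \<in> P1_space \<Omega> \<T> \<and>
      fe_equation \<Omega> \<T> \<tau> d1 c1 (\<lambda>x. f (u1 x, v1 x)) un u1 \<and>
      fe_equation \<Omega> \<T> \<tau> d2 c2 (\<lambda>x. g (u1 x, v1 x)) vn v1 \<and>
      (\<forall>k. uk k \<in> P1_space \<Omega> \<T> \<and> vk k \<in> P1_space \<Omega> \<T>) \<and>
      (\<forall>k. fe_equation \<Omega> \<T> \<tau> d1 c1 (\<lambda>x. f (uk k x, vk k x)) un (uk (Suc k)) \<and>
           fe_equation \<Omega> \<T> \<tau> d2 c2 (\<lambda>x. g (uk k x, vk k x)) vn (vk (Suc k))) \<and>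
      (\<forall>x\<in>\<Omega>. u1 x > 0 \<and> v1 x > 0 \<and> (\<forall>k. uk k x > 0 \<and> vk k x > 0)) \<and>
      (\<forall>x\<in>\<Omega>. \<bar>U (real (Suc n) * \<tau>) x - u1 x\<bar> \<le> C' * (h\<^sup>2 + \<tau>) \<and>
               \<bar>V (real (Suc n) * \<tau>) x - v1 x\<bar> \<le> C' * (h\<^sup>2 + \<tau>))
      \<longrightarrow> (\<forall>k. pair_l2_norm \<Omega> (\<lambda>x. uk (Suc k) x - u1 x) (\<lambda>x. vk (Suc k) x - v1 x)
               \<le> (C * max L\<^sub>f L\<^sub>g * (\<tau> / (1 - \<tau> * max \<beta>\<^sub>f \<beta>\<^sub>g)) * (1 + C' * (\<tau> + h\<^sup>2)))
                 * pair_l2_norm \<Omega> (\<lambda>x. uk k x - u1 x) (\<lambda>x. vk k x - v1 x))"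
proof -
  obtain M where "M \<ge> 0" and M: "\<And>t x. t \<in> {0..T} \<Longrightarrow> x \<in> closure \<Omega> \<Longrightarrow> \<bar>U t x\<bar> \<le> M \<and> \<bar>V t x\<bar> \<le> M"
    using rd_neumann_solution_bounded[OF assms(12,3)] by blast
  have lipschitz: "(max L\<^sub>f L\<^sub>g)-lipschitz_on UNIV f" "(max L\<^sub>f L\<^sub>g)-lipschitz_on UNIV g"
    by (auto intro: lipschitz_on_mono assms(7,8))
  have upper: "f p \<le> max \<beta>\<^sub>f \<beta>\<^sub>g" "g p \<le> max \<beta>\<^sub>f \<beta>\<^sub>g" for p
    using assms(9,10) by (metis max.coboundedI1 max.coboundedI2)+
  show ?thesis
  proof (intro exI[of _ "sqrt 2 * (M + 1)"] allI impI, elim conjE, goal_cases)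
    case (1 \<T> h \<tau> n un vn u1 v1 uk vk k)
    define \<delta> where "\<delta> = C' * (\<tau> + h\<^sup>2)"
    have "\<delta> \<ge> 0"
      using "1"(16) assms(4) by (force simp: \<delta>_def add.commute intro: order_trans[OF abs_ge_zero])
    have "\<bar>u1 x\<bar> \<le> M + \<delta> \<and> \<bar>v1 x\<bar> \<le> M + \<delta>" if "x \<in> \<Omega>" for x
      using "1"(16) M[of "real (Suc n) * \<tau>" x] "1"(4,6) that closure_subset
      by (force simp: \<delta>_def add.commute abs_le_iff)
    then have "pair_l2_norm \<Omega> (\<lambda>x. uk (Suc k) x - u1 x) (\<lambda>x. vk (Suc k) x - v1 x)
        \<le> sqrt 2 * max L\<^sub>f L\<^sub>g * (M + \<delta>) * (\<tau> / (1 - \<tau> * max \<beta>\<^sub>f \<beta>\<^sub>g))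
          * pair_l2_norm \<Omega> (\<lambda>x. uk k x - u1 x) (\<lambda>x. vk k x - v1 x)"
      using "1" \<open>M \<ge> 0\<close> \<open>\<delta> \<ge> 0\<close>
      by (intro picard_step_contraction[OF "1"(1) assms(1,3) _ _ _ _ lipschitz(1) upper(1) lipschitz(2)
          upper(2)]) (auto simp: less_imp_le assms(5,6))
    also have "\<dots> \<le> (sqrt 2 * (M + 1) * max L\<^sub>f L\<^sub>g * (\<tau> / (1 - \<tau> * max \<beta>\<^sub>f \<beta>\<^sub>g)) * (1 + \<delta>))
          * pair_l2_norm \<Omega> (\<lambda>x. uk k x - u1 x) (\<lambda>x. vk k x - v1 x)"
    proof -
      define q where "q = \<tau> / (1 - \<tau> * max \<beta>\<^sub>f \<beta>\<^sub>g)"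
      have "M + \<delta> \<le> (M + 1) * (1 + \<delta>)"
        using \<open>M \<ge> 0\<close> \<open>\<delta> \<ge> 0\<close> by (simp add: algebra_simps)
      moreover have "0 \<le> sqrt 2 * max L\<^sub>f L\<^sub>g * q"
        using "1"(4,5) lipschitz_on_nonneg[OF lipschitz(1)] by (simp add: q_def)
      ultimately have "sqrt 2 * max L\<^sub>f L\<^sub>g * q * (M + \<delta>) \<le> sqrt 2 * max L\<^sub>f L\<^sub>g * q * ((M + 1) * (1 + \<delta>))"
        by (rule mult_left_mono)
      then have "sqrt 2 * max L\<^sub>f L\<^sub>g * (M + \<delta>) * q \<le> sqrt 2 * (M + 1) * max L\<^sub>f L\<^sub>g * q * (1 + \<delta>)"
        by (simp only: mult_ac)
      then show ?thesis
        unfolding q_def[symmetric] by (rule mult_right_mono) (simp add: pair_l2_norm_def)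
    qed
    finally show ?case unfolding \<delta>_def .
  qed
qed

end
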